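(* Let $d\geq 1$, let $Q\subset\mathbb{Z}_+^d$ be a lower set with $|Q|=n$, and let $k$ be a positive integer. Then the number $C(Q,k,d)$ of lower sets $Q'\subset Q$ with $|Q'|\geq n-k$ satisfies $$C(Q,k,d)<\Big(\max\Big\{8,\frac{4eT(n)}{k}\Big\}\Big)^k.$$
   Context: $\mathbb{Z}_+=\{0,1,2,\dots\}$. A set $Q\subset\mathbb{Z}_+^d$ is a lower set if whenever $q\in Q$ and $q'\in\mathbb{Z}_+^d$ satisfies $q'_i\leq q_i$ for all $i$, then $q'\in Q$. For $q,q'\in\mathbb{Z}_+^d$ write $q\succ q'$ if $q_i\geq q'_i$ for all $i$. For a lower set $Q$, $M(Q)$ denotes the set of all $q'\in Q$ such that no $q\in Q\setminus\{q'\}$ satisfies $q\succ q'$ (the maximal available subset of $Q$). $T(n):=\max\{|M(Q)|: Q\subset\mathbb{Z}_+^d \text{ a lower set},\ |Q|=n\}$. *)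

theory Defs
  imports Complex_Main
begin

text \<open>Points of Z_+^d are represented as lists of naturals of length d.\<close>

definition Zd :: "nat \<Rightarrow> nat list set" where
  "Zd d = {q. length q = d}"

definition dominates :: "nat list \<Rightarrow> nat list \<Rightarrow> bool" (infix "\<succ>" 50) where
  "q \<succ> q' \<longleftrightarrow> length q = length q' \<and> (\<forall>i<length q. q' ! i \<le> q ! i)"

definition lower_set :: "nat \<Rightarrow> nat list set \<Rightarrow> bool" where
  "lower_set d Q \<longleftrightarrow> Q \<subseteq> Zd d \<and>
     (\<forall>q\<in>Q. \<forall>q'\<in>Zd d. (\<forall>i<d. q' ! i \<le> q ! i) \<longrightarrow> q' \<in> Q)"

definition max_avail :: "nat list set \<Rightarrow> nat list set" where
  "max_avail Q = {q'\<in>Q. \<not> (\<exists>q\<in>Q - {q'}. q \<succ> q')}"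

definition T :: "nat \<Rightarrow> nat \<Rightarrow> nat" where
  "T d n = Max {card (max_avail Q) | Q. lower_set d Q \<and> finite Q \<and> card Q = n}"

definition C :: "nat list set \<Rightarrow> nat \<Rightarrow> nat \<Rightarrow> nat" where
  "C Q k d = card {Q'. Q' \<subseteq> Q \<and> lower_set d Q' \<and> card Q' + k \<ge> card Q}"

end

theory Submission
  imports Defs
begin

text \<open>Taking complements, Q' \<mapsto> Q - Q' maps the lower sets counted by C Q k d injectively to
  upsets of Q with at most k elements. A nonempty upset R of a finite lower set P contains
  maximal points of P (take a point of largest coordinate sum); removing L = R \<inter> M(P) leaves
  an upset of the lower set P - L avoiding M(P) - L \<subseteq> M(P - L). Every lower subset of Q has
  at most T(n) maximal points, because a lower set can be enlarged along a coordinate axis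
  without losing maximal points. Induction on the size j of the upset together with
  Vandermonde's identity then bounds the number of upsets of size j by binom(T(n) + j, j),
  and summing over j \<le> k gives binom(T(n) + k + 1, k). This binomial coefficient is at
  most 4^k if T(n) \<le> k and at most (2 e T(n) / k)^k otherwise, by k^k \<le> e^k k!.\<close>

lemma lower_set_iff_dominates:
  "lower_set d P \<longleftrightarrow> P \<subseteq> Zd d \<and> (\<forall>y\<in>P. \<forall>x. y \<succ> x \<longrightarrow> x \<in> P)"
proof -
  have "y \<succ> x \<longleftrightarrow> x \<in> Zd d \<and> (\<forall>i<d. x ! i \<le> y ! i)" if "y \<in> Zd d" for x y
    using that by (auto simp: dominates_def Zd_def)
  then show ?thesis
    unfolding lower_set_def by (auto 0 3 simp: subset_iff)
qed

lemma lower_setD: "lower_set d P \<Longrightarrow> y \<in> P \<Longrightarrow> y \<succ> x \<Longrightarrow> x \<in> P"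
  by (auto simp: lower_set_iff_dominates)

lemma dominates_imp_sum_list_less:
  assumes "y \<succ> x" "y \<noteq> x"
  shows "sum_list x < sum_list y"
proof -
  have len: "length y = length x" and le: "\<And>i. i < length x \<Longrightarrow> x ! i \<le> y ! i"
    using assms(1) by (auto simp: dominates_def)
  obtain i where i: "i < length x" "x ! i \<noteq> y ! i"
    using assms(2) len nth_equalityI by metis
  have "(\<Sum>i = 0..<length x. x ! i) < (\<Sum>i = 0..<length x. y ! i)"
    using le i by (intro sum_strict_mono_ex1) (auto intro!: bexI[of _ i] le_neq_implies_less)
  then show ?thesis
    by (simp add: sum_list_sum_nth len)
qed

lemma max_avail_subset: "max_avail P \<subseteq> P"
  by (auto simp: max_avail_def)

lemma max_avail_antichain: "p \<in> max_avail P \<Longrightarrow> q \<in> max_avail P \<Longrightarrow> p \<succ> q \<Longrightarrow> p = q"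
  by (auto simp: max_avail_def)

lemma max_avail_Diff_subset: "max_avail P - L \<subseteq> max_avail (P - L)"
  by (auto simp: max_avail_def)

lemma max_avail_insert_subset: "max_avail P - {q. x \<succ> q} \<subseteq> max_avail (insert x P)"
  by (auto simp: max_avail_def)

lemma lower_set_Diff_max_avail:
  assumes "lower_set d P" "L \<subseteq> max_avail P"
  shows "lower_set d (P - L)"
  using assms unfolding lower_set_iff_dominates max_avail_def by blast

definition upper_in :: "nat list set \<Rightarrow> nat list set \<Rightarrow> bool" where
  "upper_in P R \<longleftrightarrow> R \<subseteq> P \<and> (\<forall>x\<in>R. \<forall>y\<in>P. y \<succ> x \<longrightarrow> y \<in> R)"

lemma upper_in_Diff_lower_set: "lower_set d Q' \<Longrightarrow> upper_in P (P - Q')"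
  by (auto simp: upper_in_def dest: lower_setD)

lemma upper_in_meets_max_avail:
  assumes "finite R" "R \<noteq> {}" "upper_in P R"
  shows "R \<inter> max_avail P \<noteq> {}"
proof -
  have "Max (sum_list ` R) \<in> sum_list ` R"
    using assms(1,2) by simp
  then obtain x where "x \<in> R" and x_max: "sum_list x = Max (sum_list ` R)"
    by (metis imageE)
  have "x \<in> max_avail P"
    unfolding max_avail_def
  proof (intro CollectI conjI notI)
    show "x \<in> P"
      using \<open>x \<in> R\<close> assms(3) by (auto simp: upper_in_def)
  next
    assume "\<exists>q\<in>P - {x}. q \<succ> x"
    then obtain q where "q \<in> P" "q \<noteq> x" "q \<succ> x"
      by blast
    then have "q \<in> R"
      using \<open>x \<in> R\<close> assms(3) by (auto simp: upper_in_def)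
    then have "sum_list q \<le> sum_list x"
      using x_max assms(1) by simp
    with \<open>q \<succ> x\<close> \<open>q \<noteq> x\<close> show False
      using dominates_imp_sum_list_less by fastforce
  qed
  with \<open>x \<in> R\<close> show ?thesis
    by auto
qed

definition upsets_avoiding :: "nat list set \<Rightarrow> nat list set \<Rightarrow> nat \<Rightarrow> nat list set set" where
  "upsets_avoiding P B j = {R. upper_in P R \<and> R \<inter> B = {} \<and> card R = j}"

lemma finite_upsets_avoiding: "finite P \<Longrightarrow> finite (upsets_avoiding P B j)"
  by (rule finite_subset[of _ "Pow P"]) (auto simp: upsets_avoiding_def upper_in_def)

lemma upsets_avoiding_0: "finite P \<Longrightarrow> upsets_avoiding P B 0 = {{}}"
  by (auto simp: upsets_avoiding_def upper_in_def finite_subset)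

text \<open>An upset R is recovered from L = R \<inter> max_avail P and the smaller upset R - L of P - L.\<close>
lemma upsets_avoiding_subset_UN:
  assumes "finite P" "j > 0"
  shows "upsets_avoiding P B j \<subseteq>
    (\<Union>l\<in>{1..j}. \<Union>L\<in>{L. L \<subseteq> max_avail P - B \<and> card L = l}.
       (\<union>) L ` upsets_avoiding (P - L) (max_avail P - L) (j - card L))"
proof
  fix R
  assume R: "R \<in> upsets_avoiding P B j"
  define L where "L = R \<inter> max_avail P"
  have "finite R"
    using R assms(1) finite_subset by (auto simp: upsets_avoiding_def upper_in_def)
  then have "L \<noteq> {}"
    using R assms(2) upper_in_meets_max_avail by (fastforce simp: L_def upsets_avoiding_def)
  then have "card L \<in> {1..j}"
    using R \<open>finite R\<close> by (auto simp: L_def upsets_avoiding_def card_gt_0_iff Suc_le_eq card_mono)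
  moreover have "L \<subseteq> max_avail P - B"
    using R by (auto simp: L_def upsets_avoiding_def)
  moreover have "R - L \<in> upsets_avoiding (P - L) (max_avail P - L) (j - card L)"
    using R \<open>finite R\<close> by (auto simp: L_def upsets_avoiding_def upper_in_def card_Diff_subset)
  moreover have "R = L \<union> (R - L)"
    by (auto simp: L_def)
  ultimately show "R \<in> (\<Union>l\<in>{1..j}. \<Union>L\<in>{L. L \<subseteq> max_avail P - B \<and> card L = l}.
       (\<union>) L ` upsets_avoiding (P - L) (max_avail P - L) (j - card L))"
    by blast
qed

lemma card_UN_subsets_le_choose:
  assumes "finite N" "\<And>L. L \<subseteq> N \<Longrightarrow> card L \<in> {1..j} \<Longrightarrow> finite (F L)"
    and "\<And>L. L \<subseteq> N \<Longrightarrow> card L \<in> {1..j} \<Longrightarrow> card (F L) \<le> b choose (j - card L)"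
  shows "card (\<Union>l\<in>{1..j}. \<Union>L\<in>{L. L \<subseteq> N \<and> card L = l}. F L) \<le> (card N + b) choose j"
proof -
  have "card (\<Union>l\<in>{1..j}. \<Union>L\<in>{L. L \<subseteq> N \<and> card L = l}. F L)
      \<le> (\<Sum>l\<in>{1..j}. \<Sum>L\<in>{L. L \<subseteq> N \<and> card L = l}. card (F L))"
    using assms(1) by (intro card_UN_le[THEN order_trans] sum_mono card_UN_le) auto
  also have "\<dots> \<le> (\<Sum>l\<in>{1..j}. \<Sum>L\<in>{L. L \<subseteq> N \<and> card L = l}. b choose (j - l))"
    using assms(3) by (intro sum_mono) auto
  also have "\<dots> = (\<Sum>l\<in>{1..j}. (card N choose l) * (b choose (j - l)))"
    using assms(1) by (simp add: n_subsets)
  also have "\<dots> \<le> (\<Sum>l\<le>j. (card N choose l) * (b choose (j - l)))"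
    by (rule sum_mono2) auto
  also have "\<dots> = (card N + b) choose j"
    by (rule vandermonde)
  finally show ?thesis .
qed

lemma card_upsets_avoiding_le:
  assumes bound: "\<And>P'. lower_set d P' \<Longrightarrow> P' \<subseteq> Q \<Longrightarrow> card (max_avail P') \<le> t"
    and "finite Q"
  shows "lower_set d P \<Longrightarrow> P \<subseteq> Q \<Longrightarrow> B \<subseteq> max_avail P \<Longrightarrow>
    card (upsets_avoiding P B j) \<le> (t - card B + j) choose j"
proof (induction j arbitrary: P B rule: less_induct)
  case (less j)
  have "finite P"
    using less.prems(2) \<open>finite Q\<close> finite_subset by blast
  define M where "M = max_avail P"
  have "finite M"
    using \<open>finite P\<close> max_avail_subset finite_subset unfolding M_def by blast
  have "card B \<le> card M" "card M \<le> t"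
    using less.prems bound \<open>finite M\<close> card_mono by (auto simp: M_def)
  have IH: "card (upsets_avoiding (P - L) (M - L) (j - card L)) \<le> (t - card M + j) choose (j - card L)"
    if L: "L \<subseteq> M - B" "card L \<in> {1..j}" for L
  proof -
    have "L \<subseteq> M" "finite L"
      using L(1) \<open>finite M\<close> finite_subset by auto
    then have "card (M - L) = card M - card L" "card L \<le> card M"
      using \<open>finite M\<close> by (auto simp: card_Diff_subset card_mono)
    then have "t - card (M - L) + (j - card L) = t - card M + j"
      using L(2) \<open>card M \<le> t\<close> by simp
    moreover have "card (upsets_avoiding (P - L) (M - L) (j - card L)) \<le>
        (t - card (M - L) + (j - card L)) choose (j - card L)"
      using L less.prems lower_set_Diff_max_avail[OF less.prems(1), of L] max_avail_Diff_subset
      by (intro less.IH) (auto simp: M_def)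
    ultimately show ?thesis
      by simp
  qed
  show ?case
  proof (cases "j = 0")
    case True
    then show ?thesis
      by (simp add: upsets_avoiding_0 \<open>finite P\<close>)
  next
    case False
    define F where "F L = (\<union>) L ` upsets_avoiding (P - L) (M - L) (j - card L)" for L
    have "card (upsets_avoiding P B j) \<le>
        card (\<Union>l\<in>{1..j}. \<Union>L\<in>{L. L \<subseteq> M - B \<and> card L = l}. F L)"
      using upsets_avoiding_subset_UN[OF \<open>finite P\<close>, of j B] False \<open>finite P\<close> \<open>finite M\<close>
      by (intro card_mono) (auto simp: M_def F_def intro!: finite_upsets_avoiding)
    also have "\<dots> \<le> (card (M - B) + (t - card M + j)) choose j"
      using \<open>finite M\<close> \<open>finite P\<close> unfolding F_def
      by (intro card_UN_subsets_le_choose order_trans[OF card_image_le IH])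
        (auto intro: finite_upsets_avoiding)
    also have "card (M - B) + (t - card M + j) = t - card B + j"
      using \<open>card B \<le> card M\<close> \<open>card M \<le> t\<close> less.prems(3) \<open>finite M\<close>
      by (simp add: card_Diff_subset finite_subset M_def)
    finally show ?thesis .
  qed
qed


lemma card_max_avail_le_T:
  assumes "lower_set d P" "finite P"
  shows "card (max_avail P) \<le> T d (card P)"
proof -
  let ?S = "{card (max_avail Q) | Q. lower_set d Q \<and> finite Q \<and> card Q = card P}"
  have "?S \<subseteq> {..card P}"
    using card_mono[OF _ max_avail_subset] by fastforce
  then have "finite ?S"
    using finite_subset by blast
  moreover have "card (max_avail P) \<in> ?S"
    using assms by blast
  ultimately show ?thesis
    unfolding T_def by (rule Max_ge)
qed

definition axis_point :: "nat \<Rightarrow> nat \<Rightarrow> nat list" where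
  "axis_point d t = t # replicate (d - 1) 0"

lemma axis_point_in_Zd: "d \<ge> 1 \<Longrightarrow> axis_point d t \<in> Zd d"
  by (simp add: axis_point_def Zd_def)

lemma inj_axis_point: "inj (axis_point d)"
  by (simp add: axis_point_def inj_def)

lemma axis_point_dominates_iff: "axis_point d t \<succ> axis_point d s \<longleftrightarrow> s \<le> t"
  by (auto simp: axis_point_def dominates_def nth_Cons split: nat.splits)

lemma dominated_by_axis_point:
  assumes "axis_point d t \<succ> q"
  obtains s where "s \<le> t" "q = axis_point d s"
proof -
  have len: "length q = Suc (d - 1)"
    and le: "\<And>i. i < length q \<Longrightarrow> q ! i \<le> axis_point d t ! i"
    using assms by (auto simp: dominates_def axis_point_def)
  have "q = axis_point d (q ! 0)"
  proof (rule nth_equalityI)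
    fix i
    assume "i < length q"
    then show "q ! i = axis_point d (q ! 0) ! i"
      using le[of i] len by (auto simp: axis_point_def nth_Cons')
  qed (simp add: len axis_point_def)
  moreover have "q ! 0 \<le> t"
    using le[of 0] len by (simp add: axis_point_def)
  ultimately show ?thesis
    using that by blast
qed

text \<open>Adding the first axis point missing from P: it becomes maximal, and it dominates
  at most one maximal point of P, because the axis is a chain and max_avail P an antichain.\<close>
lemma lower_set_insert_axis_point:
  assumes "d \<ge> 1" "lower_set d P" "finite P"
  obtains x where "x \<notin> P" "lower_set d (insert x P)"
    "card (max_avail P) \<le> card (max_avail (insert x P))"
proof -
  have "\<exists>t. axis_point d t \<notin> P"
    using assms(3) inj_on_finite[OF inj_axis_point[of d], of P] by auto
  define t where "t = (LEAST t. axis_point d t \<notin> P)"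
  define x where "x = axis_point d t"
  have "x \<notin> P"
    unfolding x_def t_def by (rule LeastI_ex) fact
  have below: "axis_point d s \<in> P" if "s < t" for s
    using not_less_Least[OF that[unfolded t_def]] by blast
  have "lower_set d (insert x P)"
    unfolding lower_set_iff_dominates
  proof (intro conjI ballI allI impI)
    show "insert x P \<subseteq> Zd d"
      using assms(1,2) axis_point_in_Zd by (auto simp: x_def lower_set_iff_dominates)
  next
    fix y q
    assume "y \<in> insert x P" "y \<succ> q"
    then consider "y \<in> P" | "x \<succ> q"
      by blast
    then show "q \<in> insert x P"
    proof cases
      case 1
      then show ?thesis
        using assms(2) \<open>y \<succ> q\<close> lower_setD by blast
    next
      case 2
      then obtain s where "s \<le> t" "q = axis_point d s"
        unfolding x_def by (rule dominated_by_axis_point)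
      then show ?thesis
        using below[of s] by (cases "s = t") (auto simp: x_def)
    qed
  qed
  have "x \<in> max_avail (insert x P)"
    using \<open>x \<notin> P\<close> assms(2) lower_setD by (fastforce simp: max_avail_def)
  let ?D = "max_avail P \<inter> {q. x \<succ> q}"
  have "finite (max_avail P)"
    using assms(3) max_avail_subset finite_subset by blast
  have "\<forall>p\<in>?D. \<forall>q\<in>?D. p = q"
  proof (intro ballI)
    fix p q
    assume "p \<in> ?D" "q \<in> ?D"
    then obtain s s' where "p = axis_point d s" "q = axis_point d s'"
      unfolding x_def by (auto elim!: dominated_by_axis_point)
    then have "p \<succ> q \<or> q \<succ> p"
      by (simp add: axis_point_dominates_iff nat_le_linear)
    then show "p = q"
      using \<open>p \<in> ?D\<close> \<open>q \<in> ?D\<close> max_avail_antichain by blast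
  qed
  then have "card ?D \<le> 1"
    using card_le_Suc0_iff_eq[of ?D] \<open>finite (max_avail P)\<close> by simp
  have "card (max_avail P) \<le> Suc (card (max_avail P - {q. x \<succ> q}))"
    using \<open>card ?D \<le> 1\<close> \<open>finite (max_avail P)\<close>
      card_Diff_subset_Int[of "max_avail P" "{q. x \<succ> q}"]
    by simp
  also have "\<dots> = card (insert x (max_avail P - {q. x \<succ> q}))"
    using \<open>x \<notin> P\<close> \<open>finite (max_avail P)\<close> max_avail_subset by (subst card_insert_disjoint) auto
  also have "\<dots> \<le> card (max_avail (insert x P))"
    using \<open>x \<in> max_avail (insert x P)\<close> max_avail_insert_subset assms(3)
      finite_subset[OF max_avail_subset, of "insert x P"]
    by (intro card_mono) auto
  finally have "card (max_avail P) \<le> card (max_avail (insert x P))" .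
  with \<open>x \<notin> P\<close> \<open>lower_set d (insert x P)\<close> show ?thesis
    by (rule that)
qed

lemma card_max_avail_le_T_of_card_le:
  assumes "d \<ge> 1" "lower_set d P" "finite P" "card P \<le> n"
  shows "card (max_avail P) \<le> T d n"
  using assms(2-4)
proof (induction "n - card P" arbitrary: P)
  case 0
  then show ?case
    using card_max_avail_le_T[of d P] by simp
next
  case (Suc m)
  obtain x where x: "x \<notin> P" "lower_set d (insert x P)"
    and le: "card (max_avail P) \<le> card (max_avail (insert x P))"
    using lower_set_insert_axis_point[OF assms(1) Suc.prems(1,2)] by blast
  have "card (max_avail (insert x P)) \<le> T d n"
    using Suc x by (intro Suc.hyps(1)) auto
  with le show ?case
    by simp
qed

lemma C_le_sum_card_upsets:
  assumes "finite Q"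
  shows "C Q k d \<le> (\<Sum>j\<le>k. card (upsets_avoiding Q {} j))"
proof -
  let ?A = "{Q'. Q' \<subseteq> Q \<and> lower_set d Q' \<and> card Q' + k \<ge> card Q}"
  have "inj_on (\<lambda>Q'. Q - Q') ?A"
    by (rule inj_onI) blast
  then have "C Q k d = card ((\<lambda>Q'. Q - Q') ` ?A)"
    unfolding C_def by (rule card_image[symmetric])
  also have "\<dots> \<le> card (\<Union>j\<le>k. upsets_avoiding Q {} j)"
  proof (rule card_mono)
    show "finite (\<Union>j\<le>k. upsets_avoiding Q {} j)"
      using assms by (simp add: finite_upsets_avoiding)
    show "(\<lambda>Q'. Q - Q') ` ?A \<subseteq> (\<Union>j\<le>k. upsets_avoiding Q {} j)"
      using assms upper_in_Diff_lower_set
      by (auto simp: upsets_avoiding_def card_Diff_subset finite_subset)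
  qed
  also have "\<dots> \<le> (\<Sum>j\<le>k. card (upsets_avoiding Q {} j))"
    by (rule card_UN_le) simp
  finally show ?thesis .
qed

lemma pow_self_le_exp_mult_fact: "real k ^ k \<le> exp (real k) * fact k"
proof -
  have "(\<lambda>i. real k ^ i / fact i) sums exp (real k)"
    using exp_converges[of "real k"] by (simp add: divide_inverse_commute)
  then have "real k ^ k / fact k \<le> exp (real k)"
    using sum_le_suminf[of "\<lambda>i. real k ^ i / fact i" "{k}"] by (auto simp: sums_iff)
  then show ?thesis
    by (simp add: field_simps)
qed

lemma binomial_le_pow_div_fact: "real (n choose k) \<le> real n ^ k / fact k"
proof -
  have "real ((n choose k) * fact k) \<le> real (n ^ k)"
    using binomial_fact_pow by (rule of_nat_mono)
  then show ?thesis
    by (simp add: pos_le_divide_eq)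
qed

lemma Suc_double_choose_le: "Suc (2 * k) choose k \<le> 4 ^ k"
proof -
  have "2 * (Suc (2 * k) choose k) = (\<Sum>i\<in>{k, Suc k}. Suc (2 * k) choose i)"
    using binomial_symmetric[of k "Suc (2 * k)"] by (simp del: binomial_Suc_Suc)
  also have "\<dots> \<le> (\<Sum>i\<le>Suc (2 * k). Suc (2 * k) choose i)"
    by (rule sum_mono2) auto
  also have "\<dots> = 2 * 4 ^ k"
    unfolding choose_row_sum by (simp add: power_mult)
  finally show ?thesis
    by simp
qed

lemma Suc_add_choose_less:
  fixes t k :: nat
  assumes "k > 0"
  shows "real (Suc (t + k) choose k) < (max 8 (4 * exp 1 * real t / real k)) ^ k"
proof (cases "t \<le> k")
  case True
  have "Suc (t + k) choose k \<le> Suc (2 * k) choose k"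
    using True by (intro binomial_right_mono) auto
  also have "\<dots> \<le> 4 ^ k"
    by (rule Suc_double_choose_le)
  finally have "real (Suc (t + k) choose k) \<le> 4 ^ k"
    by (metis of_nat_le_iff of_nat_numeral of_nat_power)
  also have "(4::real) ^ k < 8 ^ k"
    using assms by (intro power_strict_mono) auto
  also have "\<dots> \<le> (max 8 (4 * exp 1 * real t / real k)) ^ k"
    by (intro power_mono) auto
  finally show ?thesis .
next
  case False
  have "Suc (t + k) choose k \<le> (2 * t) choose k"
    using False by (intro binomial_right_mono) auto
  then have "real (Suc (t + k) choose k) \<le> real (2 * t) ^ k / fact k"
    using binomial_le_pow_div_fact[of "2 * t" k] by linarith
  also have "\<dots> \<le> real (2 * t) ^ k * exp (real k) / real k ^ k"
    using mult_right_mono[OF pow_self_le_exp_mult_fact, of "real (2 * t) ^ k"] assms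
    by (simp add: field_simps)
  also have "\<dots> = (2 * exp 1 * real t / real k) ^ k"
    using exp_of_nat_mult[of k "1::real"] by (simp add: power_divide power_mult_distrib mult_ac)
  also have "\<dots> < (4 * exp 1 * real t / real k) ^ k"
    using assms False by (intro power_strict_mono) (auto simp: divide_strict_right_mono)
  also have "\<dots> \<le> (max 8 (4 * exp 1 * real t / real k)) ^ k"
    by (intro power_mono) auto
  finally show ?thesis .
qed

theorem lemma2:
  fixes d n k :: nat and Q :: "nat list set"
  assumes "d \<ge> 1" and "lower_set d Q" and "finite Q" and "card Q = n" and "k > 0"
  shows "real (C Q k d) < (max 8 (4 * exp 1 * real (T d n) / real k)) ^ k"
proof -
  have T_bound: "card (max_avail P) \<le> T d n" if "lower_set d P" "P \<subseteq> Q" for P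
    using that assms card_mono finite_subset by (intro card_max_avail_le_T_of_card_le) auto
  have "C Q k d \<le> (\<Sum>j\<le>k. card (upsets_avoiding Q {} j))"
    using assms(3) by (rule C_le_sum_card_upsets)
  also have "\<dots> \<le> (\<Sum>j\<le>k. (T d n + j) choose j)"
    using card_upsets_avoiding_le[OF T_bound assms(3,2) _ empty_subsetI] by (intro sum_mono) simp
  also have "\<dots> = Suc (T d n + k) choose k"
    by (rule sum_choose_lower)
  finally show ?thesis
    using Suc_add_choose_less[OF assms(5), of "T d n"] by linarith
qed

end
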